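(* If $n \ge m \ge 2$, then $\mathrm{sg_e}(K_{n,m}) \ge n$. Moreover, $\mathrm{sg_e}(K_{n,n}) \ge n+1$ for every $n\ge 2$.
   Context: All graphs are finite, simple and connected. A set $S \subseteq V(G)$ is a strong edge geodetic set of $G$ if one can assign to every unordered pair $\{u,v\}$ of distinct vertices of $S$ either one shortest $u,v$-path $P_{uv}$ in $G$ or no path, in such a way that every edge of $G$ lies on at least one of the assigned paths. The strong edge geodetic number $\mathrm{sg_e}(G)$ is the minimum cardinality of a strong edge geodetic set of $G$. $K_{n,m}$ denotes the complete bipartite graph with parts of sizes $n$ and $m$. *)

theory Defs
  imports Main
begin

text \<open>Simple graphs are given by a vertex set V and a set E of edges, each edge
  being a two-element set of vertices.\<close>

definition is_path :: "'a set \<Rightarrow> 'a set set \<Rightarrow> 'a list \<Rightarrow> bool" where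
  "is_path V E p \<longleftrightarrow> p \<noteq> [] \<and> set p \<subseteq> V \<and> distinct p \<and>
     (\<forall>i. Suc i < length p \<longrightarrow> {p ! i, p ! Suc i} \<in> E)"

definition path_edges :: "'a list \<Rightarrow> 'a set set" where
  "path_edges p = {{p ! i, p ! Suc i} | i. Suc i < length p}"

definition is_shortest_path :: "'a set \<Rightarrow> 'a set set \<Rightarrow> 'a \<Rightarrow> 'a \<Rightarrow> 'a list \<Rightarrow> bool" where
  "is_shortest_path V E u v p \<longleftrightarrow> is_path V E p \<and> hd p = u \<and> last p = v \<and>
     (\<forall>q. is_path V E q \<and> hd q = u \<and> last q = v \<longrightarrow> length p \<le> length q)"

text \<open>P assigns to each unordered pair {u,v} of distinct vertices of S either
  a shortest u,v-path (Some p) or no path (None).\<close>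
definition strong_edge_geodetic :: "'a set \<Rightarrow> 'a set set \<Rightarrow> 'a set \<Rightarrow> bool" where
  "strong_edge_geodetic V E S \<longleftrightarrow> S \<subseteq> V \<and>
     (\<exists>P :: 'a set \<Rightarrow> 'a list option.
        (\<forall>u\<in>S. \<forall>v\<in>S. u \<noteq> v \<longrightarrow>
            (case P {u, v} of None \<Rightarrow> True
             | Some p \<Rightarrow> is_shortest_path V E u v p \<or> is_shortest_path V E v u p)) \<and>
        (\<forall>e\<in>E. \<exists>u\<in>S. \<exists>v\<in>S. u \<noteq> v \<and> (\<exists>p. P {u, v} = Some p \<and> e \<in> path_edges p)))"

definition sg_e :: "'a set \<Rightarrow> 'a set set \<Rightarrow> nat" where
  "sg_e V E = (LEAST k. \<exists>S. strong_edge_geodetic V E S \<and> card S = k)"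

definition Kbip_V :: "nat \<Rightarrow> nat \<Rightarrow> (nat + nat) set" where
  "Kbip_V n m = Inl ` {..<n} \<union> Inr ` {..<m}"

definition Kbip_E :: "nat \<Rightarrow> nat \<Rightarrow> (nat + nat) set set" where
  "Kbip_E n m = {{Inl i, Inr j} | i j. i < n \<and> j < m}"

end

theory Submission
  imports Defs
begin

text \<open>Let S be a strong edge geodetic set of \<open>K\<^sub>n\<^sub>,\<^sub>m\<close>. Geodesics of \<open>K\<^sub>n\<^sub>,\<^sub>m\<close> have at most
  two edges, so an edge xy with \<open>y \<notin> S\<close> can only lie on an assigned geodesic u y v whose ends
  \<open>u, v \<in> S\<close> are in the part X of x. Hence every edge meets S, so one of the two parts lies in S.
  Moreover, for each \<open>y \<notin> S\<close> in the part Y the pairs {u, v} whose geodesic has midpoint y cover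
  X, so there are at least |X|/2 of them, and pairs for different y are different. Counting
  pairs of X gives \<open>|Y - S| \<cdot> |X| / 2 \<le> |X|(|X| - 1)/2\<close>, i.e. \<open>|Y - S| < |X|\<close>. With parts of
  sizes n and m this yields \<open>|S| \<ge> n + 1\<close>, or \<open>|S| \<ge> n\<close> and \<open>|S| \<ge> m + 1\<close>.\<close>

lemma card_less_if_pair_labels_cover:
  fixes f :: "'a set \<Rightarrow> 'b"
  assumes "finite X" "X \<noteq> {}"
    and cover: "\<And>y x. y \<in> Y \<Longrightarrow> x \<in> X \<Longrightarrow> \<exists>e. e \<subseteq> X \<and> card e = 2 \<and> f e = y \<and> x \<in> e"
  shows "card Y < card X"
proof -
  define D where "D = {e. e \<subseteq> X \<and> card e = 2}"
  define Q where "Q y = {e \<in> D. f e = y}" for y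
  have "finite D" using assms(1) unfolding D_def by (auto intro: finite_subset[of _ "Pow X"])
  then have finite_Q: "finite (Q y)" for y unfolding Q_def by auto
  have "Y \<subseteq> f ` D" using cover assms(2) unfolding D_def by blast
  then have "finite Y" using \<open>finite D\<close> finite_surj by blast
  have "card X \<le> 2 * card (Q y)" if "y \<in> Y" for y
  proof -
    have "\<Union>(Q y) = X"
      using cover[OF that] unfolding Q_def D_def by blast
    then have "card X = card (\<Union>(Q y))" by simp
    also have "\<dots> \<le> (\<Sum>e\<in>Q y. card e)" by (rule card_Union_le_sum_card)
    also have "\<dots> = 2 * card (Q y)" unfolding Q_def D_def by simp
    finally show ?thesis .
  qed
  then have "card Y * card X \<le> (\<Sum>y\<in>Y. 2 * card (Q y))"
    using sum_mono[of Y "\<lambda>_. card X"] by auto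
  also have "\<dots> = 2 * card (\<Union>y\<in>Y. Q y)"
    using \<open>finite Y\<close> finite_Q by (subst card_UN_disjoint) (auto simp: Q_def sum_distrib_left)
  also have "\<dots> \<le> 2 * card D"
    using \<open>finite D\<close> by (intro mult_le_mono2 card_mono) (auto simp: Q_def)
  also have "2 * card D = card X * (card X - 1)"
  proof -
    have "even (card X * (card X - 1))" by (cases "card X") auto
    then show ?thesis unfolding D_def n_subsets[OF assms(1)] by (simp add: choose_two)
  qed
  also have "\<dots> < card X * card X"
    using assms by (simp add: card_gt_0_iff)
  finally show ?thesis by simp
qed

lemma path_edges_two [simp]: "path_edges [a, b] = {{a, b}}"
  unfolding path_edges_def by (auto simp: less_Suc_eq)

lemma path_edges_three [simp]: "path_edges [a, b, c] = {{a, b}, {b, c}}"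
  unfolding path_edges_def by (auto simp: less_Suc_eq) (metis nth_Cons_0 nth_Cons_Suc)+

lemma is_path_two_iff: "is_path V E [a, b] \<longleftrightarrow> a \<in> V \<and> b \<in> V \<and> a \<noteq> b \<and> {a, b} \<in> E"
  unfolding is_path_def by (auto simp: less_Suc_eq)

lemma is_path_three_iff:
  "is_path V E [a, b, c] \<longleftrightarrow>
     a \<in> V \<and> b \<in> V \<and> c \<in> V \<and> distinct [a, b, c] \<and> {a, b} \<in> E \<and> {b, c} \<in> E"
  unfolding is_path_def by (auto simp: less_Suc_eq)

lemma is_path_length_ge_2: "is_path V E p \<Longrightarrow> hd p \<noteq> last p \<Longrightarrow> 2 \<le> length p"
  unfolding is_path_def by (cases p) (auto simp: Suc_le_eq split: if_splits)

lemma path_edge_cases_if_length_le_3: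
  assumes "is_path V E p" "hd p = u" "last p = v" "u \<noteq> v" "length p \<le> 3" "e \<in> path_edges p"
  shows "(p = [u, v] \<and> e = {u, v}) \<or>
         (\<exists>b. p = [u, b, v] \<and> (e = {u, b} \<or> e = {b, v}) \<and> {u, b} \<in> E \<and> {b, v} \<in> E)"
proof -
  have "2 \<le> length p" using is_path_length_ge_2 assms(1-4) by blast
  with assms(5) consider a b where "p = [a, b]" | a b c where "p = [a, b, c]"
    by (cases p rule: remdups_adj.cases) (auto simp: le_Suc_eq length_Suc_conv)
  then show ?thesis
    using assms by cases (auto simp: is_path_three_iff)
qed

lemma distinct_set_doubleton:
  assumes "distinct p" "set p = {u, v}" "u \<noteq> v"
  shows "p = [u, v] \<or> p = [v, u]"
proof -
  have "length p = 2" using distinct_card[OF assms(1)] assms(2,3) by simp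
  then obtain a b where "p = [a, b]"
    by (cases p rule: remdups_adj.cases) auto
  then show ?thesis using assms by (auto simp: doubleton_eq_iff)
qed

lemma some_distinct_list_doubleton:
  assumes "u \<noteq> v"
  shows "(SOME p. distinct p \<and> set p = {u, v}) \<in> {[u, v], [v, u]}"
proof -
  let ?p = "SOME p. distinct p \<and> set p = {u, v}"
  have "\<exists>p. distinct p \<and> set p = {u, v}" using assms by (intro exI[of _ "[u, v]"]) auto
  then have "distinct ?p \<and> set ?p = {u, v}" by (rule someI_ex)
  then show ?thesis using distinct_set_doubleton[of ?p u v] assms by auto
qed

lemma is_shortest_path_edge:
  assumes "{u, v} \<in> E" "u \<in> V" "v \<in> V" "u \<noteq> v"
  shows "is_shortest_path V E u v [u, v]"
  using assms is_path_length_ge_2[of V E] unfolding is_shortest_path_def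
  by (auto simp: is_path_two_iff numeral_2_eq_2)

definition geodetic_assignment ::
    "'a set \<Rightarrow> 'a set set \<Rightarrow> 'a set \<Rightarrow> ('a set \<Rightarrow> 'a list option) \<Rightarrow> bool" where
  "geodetic_assignment V E S P \<longleftrightarrow>
     (\<forall>u\<in>S. \<forall>v\<in>S. u \<noteq> v \<longrightarrow>
        (case P {u, v} of None \<Rightarrow> True
         | Some p \<Rightarrow> is_shortest_path V E u v p \<or> is_shortest_path V E v u p)) \<and>
     (\<forall>e\<in>E. \<exists>u\<in>S. \<exists>v\<in>S. u \<noteq> v \<and> (\<exists>p. P {u, v} = Some p \<and> e \<in> path_edges p))"

lemma strong_edge_geodetic_iff:
  "strong_edge_geodetic V E S \<longleftrightarrow> S \<subseteq> V \<and> (\<exists>P. geodetic_assignment V E S P)"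
  unfolding strong_edge_geodetic_def geodetic_assignment_def ..

lemma strong_edge_geodetic_vertex_set:
  assumes edges: "\<forall>e\<in>E. \<exists>u\<in>V. \<exists>v\<in>V. u \<noteq> v \<and> e = {u, v}"
  shows "strong_edge_geodetic V E V"
proof -
  define P where "P e = (if e \<in> E then Some (SOME p. distinct p \<and> set p = e) else None)" for e
  have P_edge: "P {u, v} = Some [u, v] \<or> P {u, v} = Some [v, u]"
    if "{u, v} \<in> E" "u \<noteq> v" for u v
    using some_distinct_list_doubleton[OF \<open>u \<noteq> v\<close>] \<open>{u, v} \<in> E\<close> by (auto simp: P_def)
  have "geodetic_assignment V E V P"
    unfolding geodetic_assignment_def
  proof (intro conjI ballI impI)
    fix u v assume "u \<in> V" "v \<in> V" "u \<noteq> v"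
    show "case P {u, v} of None \<Rightarrow> True
          | Some p \<Rightarrow> is_shortest_path V E u v p \<or> is_shortest_path V E v u p"
    proof (cases "{u, v} \<in> E")
      case True
      then have "is_shortest_path V E u v [u, v]" "is_shortest_path V E v u [v, u]"
        using \<open>u \<in> V\<close> \<open>v \<in> V\<close> \<open>u \<noteq> v\<close> is_shortest_path_edge
        by (metis insert_commute)+
      with P_edge[OF True \<open>u \<noteq> v\<close>] show ?thesis by auto
    next
      case False
      then show ?thesis by (simp add: P_def)
    qed
  next
    fix e assume "e \<in> E"
    then obtain u v where "u \<in> V" "v \<in> V" "u \<noteq> v" and e: "e = {u, v}" using edges by blast
    moreover have "e \<in> path_edges [u, v]" "e \<in> path_edges [v, u]"
      using e by (simp_all add: insert_commute)
    ultimately show "\<exists>u\<in>V. \<exists>v\<in>V. u \<noteq> v \<and> (\<exists>p. P {u, v} = Some p \<and> e \<in> path_edges p)"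
      using P_edge \<open>e \<in> E\<close> by blast
  qed
  then show ?thesis unfolding strong_edge_geodetic_iff by blast
qed

lemma le_sg_eI:
  assumes "strong_edge_geodetic V E S\<^sub>0" "\<And>S. strong_edge_geodetic V E S \<Longrightarrow> k \<le> card S"
  shows "k \<le> sg_e V E"
proof -
  obtain S where "strong_edge_geodetic V E S" "card S = sg_e V E"
    using LeastI_ex[of "\<lambda>k. \<exists>S. strong_edge_geodetic V E S \<and> card S = k"] assms(1)
    unfolding sg_e_def by blast
  with assms(2) show ?thesis by metis
qed

lemma Kbip_E_iff: "e \<in> Kbip_E n m \<longleftrightarrow> (\<exists>i j. i < n \<and> j < m \<and> e = {Inl i, Inr j})"
  unfolding Kbip_E_def by auto

lemma Kbip_E_doubleton_iff [simp]:
  "{Inl i, Inr j} \<in> Kbip_E n m \<longleftrightarrow> i < n \<and> j < m"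
  "{Inr j, Inl i} \<in> Kbip_E n m \<longleftrightarrow> i < n \<and> j < m"
  "{Inl i, Inl i'} \<notin> Kbip_E n m"
  "{Inr j, Inr j'} \<notin> Kbip_E n m"
  unfolding Kbip_E_iff by (auto simp: doubleton_eq_iff)

lemma Kbip_short_path_exists:
  assumes "1 \<le> n" "1 \<le> m" "u \<in> Kbip_V n m" "v \<in> Kbip_V n m"
  obtains q where "is_path (Kbip_V n m) (Kbip_E n m) q" "hd q = u" "last q = v" "length q \<le> 3"
proof -
  have "Inl 0 \<in> Kbip_V n m" "Inr 0 \<in> Kbip_V n m"
    using assms(1,2) by (auto simp: Kbip_V_def)
  show ?thesis
  proof (cases "u = v")
    case True
    then show ?thesis using that[of "[u]"] assms(3) by (simp add: is_path_def)
  next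
    case False
    with assms(3,4) \<open>Inl 0 \<in> Kbip_V n m\<close> \<open>Inr 0 \<in> Kbip_V n m\<close> show ?thesis
      using that[of "[u, v]"] that[of "[u, Inl 0, v]"] that[of "[u, Inr 0, v]"]
      by (cases u; cases v) (auto simp: Kbip_V_def is_path_two_iff is_path_three_iff)
  qed
qed

lemma Kbip_shortest_path_length_le_3:
  assumes "1 \<le> n" "1 \<le> m" "is_shortest_path (Kbip_V n m) (Kbip_E n m) u v p"
  shows "length p \<le> 3"
proof -
  have "is_path (Kbip_V n m) (Kbip_E n m) p" "hd p = u" "last p = v"
    using assms(3) unfolding is_shortest_path_def by auto
  then have "u \<in> Kbip_V n m" "v \<in> Kbip_V n m"
    unfolding is_path_def by auto
  then obtain q where "is_path (Kbip_V n m) (Kbip_E n m) q" "hd q = u" "last q = v" "length q \<le> 3"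
    using Kbip_short_path_exists assms(1,2) by blast
  with assms(3) show ?thesis
    unfolding is_shortest_path_def by force
qed

lemma Kbip_strong_edge_geodetic_vertex_set: "strong_edge_geodetic (Kbip_V n m) (Kbip_E n m) (Kbip_V n m)"
proof (rule strong_edge_geodetic_vertex_set, intro ballI)
  fix e assume "e \<in> Kbip_E n m"
  then obtain i j where "i < n" "j < m" "e = {Inl i, Inr j}" unfolding Kbip_E_iff by blast
  then show "\<exists>u\<in>Kbip_V n m. \<exists>v\<in>Kbip_V n m. u \<noteq> v \<and> e = {u, v}"
    unfolding Kbip_V_def by blast
qed

lemma Kbip_edge_leaving_S_on_geodesic:
  assumes "1 \<le> n" "1 \<le> m" "geodetic_assignment (Kbip_V n m) (Kbip_E n m) S P"
    and "{x, y} \<in> Kbip_E n m" "y \<notin> S"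
  shows "\<exists>u\<in>S. \<exists>v\<in>S. u \<noteq> v \<and> x \<in> {u, v} \<and> the (P {u, v}) ! 1 = y \<and>
           {u, y} \<in> Kbip_E n m \<and> {y, v} \<in> Kbip_E n m"
proof -
  obtain u v q where uv: "u \<in> S" "v \<in> S" "u \<noteq> v" and q: "P {u, v} = Some q" "{x, y} \<in> path_edges q"
    using assms(3,4) unfolding geodetic_assignment_def by blast
  have "is_shortest_path (Kbip_V n m) (Kbip_E n m) u v q \<or> is_shortest_path (Kbip_V n m) (Kbip_E n m) v u q"
    using assms(3) uv q(1) unfolding geodetic_assignment_def by force
  then obtain u' v' where ends: "{u', v'} = {u, v}" "u' \<noteq> v'"
    and sp: "is_shortest_path (Kbip_V n m) (Kbip_E n m) u' v' q"
    using uv(3) by (metis insert_commute)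
  have "is_path (Kbip_V n m) (Kbip_E n m) q" "hd q = u'" "last q = v'"
    using sp unfolding is_shortest_path_def by auto
  from path_edge_cases_if_length_le_3[OF this ends(2) _ q(2)]
  consider "q = [u', v']" "{x, y} = {u', v'}"
    | b where "q = [u', b, v']" "{x, y} = {u', b} \<or> {x, y} = {b, v'}"
        "{u', b} \<in> Kbip_E n m" "{b, v'} \<in> Kbip_E n m"
    using Kbip_shortest_path_length_le_3[OF assms(1,2) sp] by blast
  then show ?thesis
  proof cases
    case 1
    then show ?thesis using ends(1) uv assms(5) by (auto simp: doubleton_eq_iff)
  next
    case 2
    then have "y = b" "x \<in> {u', v'}"
      using ends(1) uv assms(5) by (auto simp: doubleton_eq_iff)
    moreover have "u' \<in> S" "v' \<in> S" "the (P {u', v'}) ! 1 = b"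
      using ends(1) uv q(1) 2(1) by (auto simp: doubleton_eq_iff insert_commute)
    ultimately show ?thesis
      using 2(3,4) ends(2) by blast
  qed
qed

lemma Kbip_edge_meets_S:
  assumes "1 \<le> n" "1 \<le> m" "geodetic_assignment (Kbip_V n m) (Kbip_E n m) S P"
    and "{x, y} \<in> Kbip_E n m"
  shows "x \<in> S \<or> y \<in> S"
  using Kbip_edge_leaving_S_on_geodesic[OF assms] by blast

lemma Kbip_card_side_outside_less:
  assumes "1 \<le> n" "1 \<le> m" "geodetic_assignment (Kbip_V n m) (Kbip_E n m) S P"
    and "finite X" "X \<noteq> {}"
    and complete: "\<And>x y. x \<in> X \<Longrightarrow> y \<in> Y \<Longrightarrow> {x, y} \<in> Kbip_E n m"
    and bipartite: "\<And>u y. y \<in> Y \<Longrightarrow> {u, y} \<in> Kbip_E n m \<Longrightarrow> u \<in> X"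
  shows "card (Y - S) < card X"
proof (rule card_less_if_pair_labels_cover[where f = "\<lambda>e. the (P e) ! 1"])
  fix y x assume "y \<in> Y - S" and x: "x \<in> X"
  then have y: "y \<in> Y" "y \<notin> S" by auto
  obtain u v where "u \<in> S" "v \<in> S" "u \<noteq> v" "x \<in> {u, v}" "the (P {u, v}) ! 1 = y"
      and uy: "{u, y} \<in> Kbip_E n m" and yv: "{y, v} \<in> Kbip_E n m"
    using Kbip_edge_leaving_S_on_geodesic[OF assms(1-3) complete[OF x y(1)] y(2)] by blast
  moreover have "u \<in> X" using bipartite[OF y(1) uy] .
  moreover have "v \<in> X" using bipartite[OF y(1)] yv by (simp add: insert_commute)
  ultimately show "\<exists>e. e \<subseteq> X \<and> card e = 2 \<and> the (P e) ! 1 = y \<and> x \<in> e"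
    by (intro exI[of _ "{u, v}"]) auto
qed (use assms in auto)

lemma Kbip_strong_edge_geodetic_card:
  assumes "1 \<le> n" "1 \<le> m" "strong_edge_geodetic (Kbip_V n m) (Kbip_E n m) S"
  shows "n \<le> card S \<and> (n + 1 \<le> card S \<or> m + 1 \<le> card S)"
proof -
  define A where "A = (Inl ` {..<n} :: (nat + nat) set)"
  define B where "B = (Inr ` {..<m} :: (nat + nat) set)"
  obtain P where S: "S \<subseteq> A \<union> B" and P: "geodetic_assignment (Kbip_V n m) (Kbip_E n m) S P"
    using assms(3) unfolding strong_edge_geodetic_iff Kbip_V_def A_def B_def by blast
  have fin: "finite A" "finite B" and card: "card A = n" "card B = m"
    unfolding A_def B_def by (auto simp: card_image)
  have "A \<noteq> {}" "B \<noteq> {}" using card assms(1,2) by auto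
  have count: "card S + card (A - S) + card (B - S) = n + m"
  proof -
    have "A \<inter> B = {}" unfolding A_def B_def by auto
    then have "card (A \<union> B) = n + m" using fin card by (simp add: card_Un_disjoint)
    moreover have "card (A \<union> B) = card S + card ((A \<union> B) - S)"
      using S fin by (simp add: card_Diff_subset finite_subset card_mono)
    moreover have "card ((A \<union> B) - S) = card (A - S) + card (B - S)"
      using \<open>A \<inter> B = {}\<close> fin by (simp add: Un_Diff, intro card_Un_disjoint) auto
    ultimately show ?thesis by linarith
  qed
  have B_less: "card (B - S) < n"
    using Kbip_card_side_outside_less[OF assms(1,2) P fin(1) \<open>A \<noteq> {}\<close>, of B] card(1)
    unfolding A_def B_def by (auto simp: Kbip_E_iff doubleton_eq_iff)
  have A_less: "card (A - S) < m"
    using Kbip_card_side_outside_less[OF assms(1,2) P fin(2) \<open>B \<noteq> {}\<close>, of A] card(2)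
    unfolding A_def B_def by (auto simp: Kbip_E_iff doubleton_eq_iff)
  have B_le: "card (B - S) \<le> m" using card_mono[OF fin(2) Diff_subset] card(2) by simp
  have "card (A - S) = 0 \<or> card (B - S) = 0"
  proof (rule ccontr)
    assume "\<not> ?thesis"
    then have "A - S \<noteq> {}" "B - S \<noteq> {}" by (metis card.empty)+
    then obtain a b where "a \<in> A - S" "b \<in> B - S" by blast
    then show False
      using Kbip_edge_meets_S[OF assms(1,2) P, of a b] unfolding A_def B_def by auto
  qed
  then show ?thesis
    using count B_less A_less B_le by (elim disjE) linarith+
qed

theorem mainTheorem4:
  shows "(\<forall>n m :: nat. n \<ge> m \<and> m \<ge> 2 \<longrightarrow> sg_e (Kbip_V n m) (Kbip_E n m) \<ge> n) \<and>
         (\<forall>n :: nat. n \<ge> 2 \<longrightarrow> sg_e (Kbip_V n n) (Kbip_E n n) \<ge> n + 1)"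
proof (intro conjI allI impI)
  fix n m :: nat assume "n \<ge> m \<and> m \<ge> 2"
  then show "n \<le> sg_e (Kbip_V n m) (Kbip_E n m)"
    using Kbip_strong_edge_geodetic_card[of n m] by (intro le_sg_eI[OF Kbip_strong_edge_geodetic_vertex_set]) auto
next
  fix n :: nat assume "n \<ge> 2"
  then show "n + 1 \<le> sg_e (Kbip_V n n) (Kbip_E n n)"
    using Kbip_strong_edge_geodetic_card[of n n] by (intro le_sg_eI[OF Kbip_strong_edge_geodetic_vertex_set]) auto
qed

end
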